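(* Let $\Lambda,\Gamma$ be row-finite $k$-graphs and let $p:\Lambda\to\Gamma$ be a surjective $k$-graph morphism with $r$-path lifting. If $\Gamma$ is aperiodic, then $\Lambda$ is aperiodic.
   Context: A $k$-graph is a countable category $\Lambda$ with a functor $d:\Lambda\to\mathbb{N}^k$ with unique factorisation. $\Lambda^n=d^{-1}(n)$, $\Lambda^0$ = vertices, $v\Lambda=\{\lambda:r(\lambda)=v\}$; row-finite: $v\Lambda^n$ finite. A $k$-graph morphism is a degree-preserving functor. A surjective $k$-graph morphism $p:\Lambda\to\Gamma$ has $r$-path lifting if for all $v\in\Lambda^0$ and $\lambda\in p(v)\Gamma$ there is $\lambda'\in v\Lambda$ with $p(\lambda')=\lambda$. For $\lambda$ and $m\le n\le d(\lambda)$, $\lambda(m,n)$ is the unique path of degree $n-m$ with $\lambda=\lambda'\lambda(m,n)\lambda''$ and $d(\lambda')=m$. A $k$-graph $\Lambda$ is aperiodic if for every $v\in\Lambda^0$ and all $m\ne n\in\mathbb{N}^k$ there is $\lambda\in v\Lambda$ with $d(\lambda)\ge m\vee n$ and $\lambda(m,m+d(\lambda)-(m\vee n))\ne\lambda(n,n+d(\lambda)-(m\vee n))$, where $(m\vee n)_i=\max\{m_i,n_i\}$. *)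

theory Defs
  imports Main "HOL-Library.Countable_Set"
begin

text \<open>Degrees live in N^k, represented as functions 'k => nat for a finite
index type 'k (so k = CARD('k)).  Operations are pointwise.\<close>

definition dadd :: "('k \<Rightarrow> nat) \<Rightarrow> ('k \<Rightarrow> nat) \<Rightarrow> ('k \<Rightarrow> nat)" where
  "dadd m n = (\<lambda>i. m i + n i)"

definition dsub :: "('k \<Rightarrow> nat) \<Rightarrow> ('k \<Rightarrow> nat) \<Rightarrow> ('k \<Rightarrow> nat)" where
  "dsub m n = (\<lambda>i. m i - n i)"

definition djoin :: "('k \<Rightarrow> nat) \<Rightarrow> ('k \<Rightarrow> nat) \<Rightarrow> ('k \<Rightarrow> nat)" where
  "djoin m n = (\<lambda>i. max (m i) (n i))"

definition dzero :: "'k \<Rightarrow> nat" where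
  "dzero = (\<lambda>i. 0)"

text \<open>A category with degree functor: objects (vertices), morphisms (paths),
source, range, composition (comp l m = l after m, defined when src l = rng m),
identities and degree.\<close>

record ('v, 'p, 'k) kgraph =
  verts :: "'v set"
  paths :: "'p set"
  src   :: "'p \<Rightarrow> 'v"
  rng   :: "'p \<Rightarrow> 'v"
  comp  :: "'p \<Rightarrow> 'p \<Rightarrow> 'p"
  ident :: "'v \<Rightarrow> 'p"
  deg   :: "'p \<Rightarrow> ('k \<Rightarrow> nat)"

definition is_kgraph :: "('v, 'p, 'k::finite) kgraph \<Rightarrow> bool" where
  "is_kgraph G \<longleftrightarrow>
     countable (verts G) \<and> countable (paths G) \<and>
     (\<forall>l\<in>paths G. src G l \<in> verts G \<and> rng G l \<in> verts G) \<and>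
     (\<forall>v\<in>verts G. ident G v \<in> paths G \<and> src G (ident G v) = v \<and> rng G (ident G v) = v) \<and>
     (\<forall>l\<in>paths G. \<forall>m\<in>paths G. src G l = rng G m \<longrightarrow>
         comp G l m \<in> paths G \<and> src G (comp G l m) = src G m \<and> rng G (comp G l m) = rng G l) \<and>
     (\<forall>l\<in>paths G. \<forall>m\<in>paths G. \<forall>n\<in>paths G. src G l = rng G m \<longrightarrow> src G m = rng G n \<longrightarrow>
         comp G (comp G l m) n = comp G l (comp G m n)) \<and>
     (\<forall>l\<in>paths G. comp G (ident G (rng G l)) l = l \<and> comp G l (ident G (src G l)) = l) \<and>
     (\<forall>v\<in>verts G. deg G (ident G v) = dzero) \<and>
     (\<forall>l\<in>paths G. \<forall>m\<in>paths G. src G l = rng G m \<longrightarrow>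
         deg G (comp G l m) = dadd (deg G l) (deg G m)) \<and>
     (\<forall>l\<in>paths G. \<forall>m n. deg G l = dadd m n \<longrightarrow>
         (\<exists>!(a, b). a \<in> paths G \<and> b \<in> paths G \<and> src G a = rng G b \<and>
                    deg G a = m \<and> deg G b = n \<and> comp G a b = l))"

definition row_finite :: "('v, 'p, 'k) kgraph \<Rightarrow> bool" where
  "row_finite G \<longleftrightarrow>
     (\<forall>v\<in>verts G. \<forall>n. finite {l \<in> paths G. rng G l = v \<and> deg G l = n})"

definition kgraph_morphism ::
  "('v, 'p, 'k) kgraph \<Rightarrow> ('w, 'q, 'k) kgraph \<Rightarrow> ('v \<Rightarrow> 'w) \<Rightarrow> ('p \<Rightarrow> 'q) \<Rightarrow> bool" where
  "kgraph_morphism L G pv pp \<longleftrightarrow>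
     (\<forall>v\<in>verts L. pv v \<in> verts G) \<and>
     (\<forall>l\<in>paths L. pp l \<in> paths G) \<and>
     (\<forall>l\<in>paths L. src G (pp l) = pv (src L l) \<and> rng G (pp l) = pv (rng L l)) \<and>
     (\<forall>v\<in>verts L. pp (ident L v) = ident G (pv v)) \<and>
     (\<forall>l\<in>paths L. \<forall>m\<in>paths L. src L l = rng L m \<longrightarrow>
         pp (comp L l m) = comp G (pp l) (pp m)) \<and>
     (\<forall>l\<in>paths L. deg G (pp l) = deg L l)"

definition surjective_morphism ::
  "('v, 'p, 'k) kgraph \<Rightarrow> ('w, 'q, 'k) kgraph \<Rightarrow> ('v \<Rightarrow> 'w) \<Rightarrow> ('p \<Rightarrow> 'q) \<Rightarrow> bool" where
  "surjective_morphism L G pv pp \<longleftrightarrow>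
     kgraph_morphism L G pv pp \<and> pv ` verts L = verts G \<and> pp ` paths L = paths G"

definition r_path_lifting ::
  "('v, 'p, 'k) kgraph \<Rightarrow> ('w, 'q, 'k) kgraph \<Rightarrow> ('v \<Rightarrow> 'w) \<Rightarrow> ('p \<Rightarrow> 'q) \<Rightarrow> bool" where
  "r_path_lifting L G pv pp \<longleftrightarrow>
     (\<forall>v\<in>verts L. \<forall>l\<in>paths G. rng G l = pv v \<longrightarrow>
        (\<exists>l'\<in>paths L. rng L l' = v \<and> pp l' = l))"

definition seg :: "('v, 'p, 'k) kgraph \<Rightarrow> 'p \<Rightarrow> ('k \<Rightarrow> nat) \<Rightarrow> ('k \<Rightarrow> nat) \<Rightarrow> 'p" where
  "seg G l m n = (THE s. \<exists>a b. a \<in> paths G \<and> s \<in> paths G \<and> b \<in> paths G \<and>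
        src G a = rng G s \<and> src G s = rng G b \<and>
        deg G a = m \<and> deg G s = dsub n m \<and> comp G (comp G a s) b = l)"

definition aperiodic :: "('v, 'p, 'k) kgraph \<Rightarrow> bool" where
  "aperiodic G \<longleftrightarrow>
     (\<forall>v\<in>verts G. \<forall>m n. m \<noteq> n \<longrightarrow>
        (\<exists>l\<in>paths G. rng G l = v \<and> djoin m n \<le> deg G l \<and>
           seg G l m (dsub (dadd m (deg G l)) (djoin m n)) \<noteq>
           seg G l n (dsub (dadd n (deg G l)) (djoin m n))))"

end

theory Submission
  imports Defs
begin

text \<open>Proof idea: segments are defined by unique factorisation, so a degree-preserving functor
  maps the segment l(m,n) of l onto the segment p(l)(m,n) of p(l).  Given v, lift through
  r-path lifting a path at p(v) witnessing aperiodicity of the quotient; its two segments have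
  distinct images, so they are distinct.\<close>

definition is_seg :: "('v, 'p, 'k) kgraph \<Rightarrow> 'p \<Rightarrow> ('k \<Rightarrow> nat) \<Rightarrow> ('k \<Rightarrow> nat) \<Rightarrow> 'p \<Rightarrow> bool" where
  "is_seg G l m n s \<longleftrightarrow> (\<exists>a b. a \<in> paths G \<and> s \<in> paths G \<and> b \<in> paths G \<and>
        src G a = rng G s \<and> src G s = rng G b \<and>
        deg G a = m \<and> deg G s = dsub n m \<and> comp G (comp G a s) b = l)"

lemma kgraph_factorisation_unique:
  assumes "is_kgraph G" "l \<in> paths G" "deg G l = dadd m n"
    and "a1 \<in> paths G" "b1 \<in> paths G" "src G a1 = rng G b1" "deg G a1 = m" "deg G b1 = n"
        "comp G a1 b1 = l"
    and "a2 \<in> paths G" "b2 \<in> paths G" "src G a2 = rng G b2" "deg G a2 = m" "deg G b2 = n"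
        "comp G a2 b2 = l"
  shows "a1 = a2 \<and> b1 = b2"
proof -
  have "\<exists>!(a, b). a \<in> paths G \<and> b \<in> paths G \<and> src G a = rng G b \<and>
                 deg G a = m \<and> deg G b = n \<and> comp G a b = l"
    using assms(1-3) unfolding is_kgraph_def by blast
  then have "(a1, b1) = (a2, b2)"
    using assms(4-15) unfolding Ex1_def by auto
  then show ?thesis by simp
qed

lemma is_seg_exists:
  assumes G: "is_kgraph G" and l: "l \<in> paths G" and "m \<le> n" and "n \<le> deg G l"
  shows "\<exists>s. is_seg G l m n s"
proof -
  have "deg G l = dadd n (dsub (deg G l) n)"
    using \<open>n \<le> deg G l\<close> by (auto simp: dadd_def dsub_def fun_eq_iff le_fun_def)
  then obtain c b where cb: "c \<in> paths G" "b \<in> paths G" "src G c = rng G b" "deg G c = n"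
      "comp G c b = l"
    using G l unfolding is_kgraph_def by blast
  have "deg G c = dadd m (dsub n m)"
    using \<open>m \<le> n\<close> cb(4) by (auto simp: dadd_def dsub_def fun_eq_iff le_fun_def)
  then obtain a s where as: "a \<in> paths G" "s \<in> paths G" "src G a = rng G s" "deg G a = m"
      "deg G s = dsub n m" "comp G a s = c"
    using G cb(1) unfolding is_kgraph_def by blast
  have "src G s = rng G b"
    using G as cb unfolding is_kgraph_def by metis
  then show ?thesis unfolding is_seg_def using as cb by blast
qed

lemma is_seg_unique:
  assumes G: "is_kgraph G" and l: "l \<in> paths G"
    and "is_seg G l m n s1" and "is_seg G l m n s2"
  shows "s1 = s2"
proof -
  obtain a1 b1 where h1: "a1 \<in> paths G" "s1 \<in> paths G" "b1 \<in> paths G"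
      "src G a1 = rng G s1" "src G s1 = rng G b1"
      "deg G a1 = m" "deg G s1 = dsub n m" "comp G (comp G a1 s1) b1 = l"
    using \<open>is_seg G l m n s1\<close> unfolding is_seg_def by blast
  obtain a2 b2 where h2: "a2 \<in> paths G" "s2 \<in> paths G" "b2 \<in> paths G"
      "src G a2 = rng G s2" "src G s2 = rng G b2"
      "deg G a2 = m" "deg G s2 = dsub n m" "comp G (comp G a2 s2) b2 = l"
    using \<open>is_seg G l m n s2\<close> unfolding is_seg_def by blast
  have c1: "comp G a1 s1 \<in> paths G" "src G (comp G a1 s1) = src G s1"
      "deg G (comp G a1 s1) = dadd m (dsub n m)"
    using G h1 unfolding is_kgraph_def by auto
  have c2: "comp G a2 s2 \<in> paths G" "src G (comp G a2 s2) = src G s2"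
      "deg G (comp G a2 s2) = dadd m (dsub n m)"
    using G h2 unfolding is_kgraph_def by auto
  have dl1: "deg G l = dadd (dadd m (dsub n m)) (deg G b1)"
    using G h1 c1 unfolding is_kgraph_def by metis
  have dl2: "deg G l = dadd (dadd m (dsub n m)) (deg G b2)"
    using G h2 c2 unfolding is_kgraph_def by metis
  have "deg G b1 = deg G b2"
    using dl1 dl2 by (auto simp: dadd_def fun_eq_iff)
  then have "comp G a1 s1 = comp G a2 s2"
    using kgraph_factorisation_unique[OF G l dl1] h1 h2 c1 c2 dl1 by simp
  then have "a1 = a2 \<and> s1 = s2"
    using kgraph_factorisation_unique[OF G c1(1) c1(3)] h1 h2 c1 c2 by simp
  then show ?thesis by simp
qed

lemma is_seg_seg:
  assumes G: "is_kgraph G" and l: "l \<in> paths G" and "m \<le> n" and "n \<le> deg G l"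
  shows "is_seg G l m n (seg G l m n)"
proof -
  obtain s where s: "is_seg G l m n s"
    using is_seg_exists[OF assms] by blast
  have "seg G l m n = s"
    unfolding seg_def is_seg_def[symmetric] using s is_seg_unique[OF G l] by blast
  with s show ?thesis by simp
qed

lemma kgraph_morphism_is_seg:
  assumes mor: "kgraph_morphism L G pv pp" and L: "is_kgraph L" and "is_seg L l m n s"
  shows "is_seg G (pp l) m n (pp s)"
proof -
  obtain a b where h: "a \<in> paths L" "s \<in> paths L" "b \<in> paths L"
      "src L a = rng L s" "src L s = rng L b"
      "deg L a = m" "deg L s = dsub n m" "comp L (comp L a s) b = l"
    using \<open>is_seg L l m n s\<close> unfolding is_seg_def by blast
  have "comp L a s \<in> paths L" "src L (comp L a s) = src L s"
    using L h unfolding is_kgraph_def by auto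
  then have "pp l = comp G (comp G (pp a) (pp s)) (pp b)"
    using mor h unfolding kgraph_morphism_def by metis
  then show ?thesis
    unfolding is_seg_def using mor h unfolding kgraph_morphism_def by (metis (no_types))
qed

lemma kgraph_morphism_seg:
  assumes mor: "kgraph_morphism L G pv pp" and L: "is_kgraph L" and G: "is_kgraph G"
    and l: "l \<in> paths L" and "m \<le> n" and "n \<le> deg L l"
  shows "pp (seg L l m n) = seg G (pp l) m n"
proof -
  have pl: "pp l \<in> paths G" "deg G (pp l) = deg L l"
    using mor l unfolding kgraph_morphism_def by auto
  have "is_seg G (pp l) m n (pp (seg L l m n))"
    using kgraph_morphism_is_seg[OF mor L is_seg_seg[OF L l]] assms(5,6) by blast
  moreover have "is_seg G (pp l) m n (seg G (pp l) m n)"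
    using is_seg_seg[OF G pl(1)] assms(5,6) pl(2) by simp
  ultimately show ?thesis
    using is_seg_unique[OF G pl(1)] by blast
qed

lemma dsub_dadd_between:
  assumes "m \<le> j" and "j \<le> d"
  shows "m \<le> dsub (dadd m d) j" and "dsub (dadd m d) j \<le> d"
proof -
  have "m i \<le> m i + d i - j i \<and> m i + d i - j i \<le> d i" for i
  proof -
    have "m i \<le> j i" "j i \<le> d i"
      using assms by (auto simp: le_fun_def)
    then show ?thesis by linarith
  qed
  then show "m \<le> dsub (dadd m d) j" "dsub (dadd m d) j \<le> d"
    by (auto simp: le_fun_def dadd_def dsub_def)
qed

lemma aperiodic_if_morphism_r_path_lifting:
  fixes L :: "('v, 'p, 'k::finite) kgraph" and G :: "('w, 'q, 'k) kgraph"
  assumes L: "is_kgraph L" and G: "is_kgraph G" and mor: "kgraph_morphism L G pv pp"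
    and lift: "r_path_lifting L G pv pp" and "aperiodic G"
  shows "aperiodic L"
  unfolding aperiodic_def
proof (intro ballI allI impI)
  fix v and m n :: "'k \<Rightarrow> nat"
  assume v: "v \<in> verts L" and "m \<noteq> n"
  have "pv v \<in> verts G"
    using mor v unfolding kgraph_morphism_def by blast
  then obtain l where l: "l \<in> paths G" "rng G l = pv v" "djoin m n \<le> deg G l"
      "seg G l m (dsub (dadd m (deg G l)) (djoin m n))
         \<noteq> seg G l n (dsub (dadd n (deg G l)) (djoin m n))"
    using \<open>aperiodic G\<close> \<open>m \<noteq> n\<close> unfolding aperiodic_def by blast
  obtain l' where l': "l' \<in> paths L" "rng L l' = v" "pp l' = l"
    using lift v l unfolding r_path_lifting_def by blast
  have deg_l': "deg L l' = deg G l"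
    using mor l' unfolding kgraph_morphism_def by auto
  have "m \<le> djoin m n" "n \<le> djoin m n"
    by (auto simp: le_fun_def djoin_def)
  then have "pp (seg L l' m (dsub (dadd m (deg L l')) (djoin m n)))
               \<noteq> pp (seg L l' n (dsub (dadd n (deg L l')) (djoin m n)))"
    using l l' deg_l' kgraph_morphism_seg[OF mor L G l'(1)]
      dsub_dadd_between[of m "djoin m n" "deg L l'"]
      dsub_dadd_between[of n "djoin m n" "deg L l'"]
    by (simp add: order_trans)
  then show "\<exists>l\<in>paths L. rng L l = v \<and> djoin m n \<le> deg L l \<and>
      seg L l m (dsub (dadd m (deg L l)) (djoin m n))
        \<noteq> seg L l n (dsub (dadd n (deg L l)) (djoin m n))"
    using l l' deg_l' by auto
qed

theorem theorem3p3:
  fixes L :: "('v, 'p, 'k::finite) kgraph" and G :: "('w, 'q, 'k) kgraph"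
    and pv :: "'v \<Rightarrow> 'w" and pp :: "'p \<Rightarrow> 'q"
  assumes "is_kgraph L" and "is_kgraph G"
    and "row_finite L" and "row_finite G"
    and "surjective_morphism L G pv pp"
    and "r_path_lifting L G pv pp"
    and "aperiodic G"
  shows "aperiodic L"
  using aperiodic_if_morphism_r_path_lifting[OF assms(1,2) _ assms(6,7)] assms(5)
  unfolding surjective_morphism_def by blast

end
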